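(* Let $H,H'$ be heaps, $a$ an address, $R$ a register file, $v$ a value and $\tau$ an ownership well-formed type. If $H\approx_a H'$, $\mathrm{own}(H,v,\tau)(a)=0$ and $\mathrm{SATv}(H,R,v,\tau)$, then $\mathrm{SATv}(H',R,v,\tau)$.
   Context: Refinement formulas are first-order formulas over integer variables, literals, a value variable $\nu$, atomic predicates of a fixed theory and context-prefix predicates; $\models\psi$ means validity. Types $\tau ::= \{\nu:\mathtt{int}\mid\varphi\}\mid\tau\ \mathtt{ref}^r$, $r\in[0,1]$ rational. $\top_0=\{\nu:\mathtt{int}\mid\top\}$, $\top_i=\top_{i-1}\ \mathtt{ref}^0$; a type is ownership well-formed if every subterm $\tau'\ \mathtt{ref}^0$ has $\tau'=\top_n$ for some $n$ (the paper imposes this on all types). Values: integers or addresses; heap: finite partial map addresses $\to$ values; register file: finite partial map variables $\to$ values. $[R]\varphi$: $[\emptyset]\varphi=\varphi$, $[R\{x\mapsto n\}]\varphi=[R][n/x]\varphi$ ($n$ integer), $[R\{x\mapsto a\}]\varphi=[R]\varphi$ ($a$ address). $\mathrm{SATv}(H,R,v,\tau)$: for $\tau=\{\nu:\mathtt{int}\mid\varphi\}$, $v\in\mathbb Z$ and $\models[R][v/\nu]\varphi$; for $\tau=\tau'\ \mathtt{ref}^r$, $v$ is an address $a\in dom(H)$ and $\mathrm{SATv}(H,R,H(a),\tau')$. $H\vdash v\Downarrow n$ is the smallest relation with: $v\in\mathbb Z$ implies $H\vdash v\Downarrow0$; if $H\vdash v\Downarrow n$ and $H(a)=v$ then $H\vdash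 a\Downarrow n+1$. $H\approx_a H'$ iff $dom(H)=dom(H')$, $H(a')=H'(a')$ for all $a'\in dom(H)$ with $a'\neq a$, and for all $n$, $H\vdash a\Downarrow n$ iff $H'\vdash a\Downarrow n$. Ownership maps: functions addresses $\to$ nonnegative rationals added pointwise, $\{a\mapsto r\}$ maps $a$ to $r$ and all else to 0, $\emptyset$ zero map; $\mathrm{own}(H,v,\tau)=\{a\mapsto r\}+\mathrm{own}(H,H(a),\tau')$ if $v=a\in dom(H)$ and $\tau=\tau'\ \mathtt{ref}^r$, otherwise $\emptyset$. *)

theory Defs
  imports Complex_Main
begin

type_synonym var = string

datatype tm = TVar var | TNu | TLit int | TAdd tm tm | TMul tm tm | TNeg tm

text \<open>Atomic predicates of the fixed theory and context-prefix predicates are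
  represented by named predicate symbols applied to terms; their meaning is given by
  an interpretation I (the fixed theory), passed explicitly to the validity judgement.\<close>
datatype fml = FTrue | FFalse | FEq tm tm | FLe tm tm | FAtom string "tm list"
  | FNot fml | FAnd fml fml | FOr fml fml | FImp fml fml
  | FAll var fml | FEx var fml

type_synonym interp = "string \<Rightarrow> int list \<Rightarrow> bool"

fun eval_tm :: "(var \<Rightarrow> int) \<Rightarrow> int \<Rightarrow> tm \<Rightarrow> int" where
  "eval_tm s nu (TVar x) = s x"
| "eval_tm s nu TNu = nu"
| "eval_tm s nu (TLit n) = n"
| "eval_tm s nu (TAdd a b) = eval_tm s nu a + eval_tm s nu b"
| "eval_tm s nu (TMul a b) = eval_tm s nu a * eval_tm s nu b"
| "eval_tm s nu (TNeg a) = - eval_tm s nu a"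

fun holds :: "interp \<Rightarrow> (var \<Rightarrow> int) \<Rightarrow> int \<Rightarrow> fml \<Rightarrow> bool" where
  "holds I s nu FTrue = True"
| "holds I s nu FFalse = False"
| "holds I s nu (FEq a b) = (eval_tm s nu a = eval_tm s nu b)"
| "holds I s nu (FLe a b) = (eval_tm s nu a \<le> eval_tm s nu b)"
| "holds I s nu (FAtom p ts) = I p (map (eval_tm s nu) ts)"
| "holds I s nu (FNot f) = (\<not> holds I s nu f)"
| "holds I s nu (FAnd f g) = (holds I s nu f \<and> holds I s nu g)"
| "holds I s nu (FOr f g) = (holds I s nu f \<or> holds I s nu g)"
| "holds I s nu (FImp f g) = (holds I s nu f \<longrightarrow> holds I s nu g)"
| "holds I s nu (FAll x f) = (\<forall>n. holds I (s(x := n)) nu f)"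
| "holds I s nu (FEx x f) = (\<exists>n. holds I (s(x := n)) nu f)"

definition valid :: "interp \<Rightarrow> fml \<Rightarrow> bool" where
  "valid I f \<longleftrightarrow> (\<forall>s nu. holds I s nu f)"

text \<open>The substitution is given as a
  partial map from variables to integers (simultaneous; literals contain no variables,
  so there is no capture, and binders simply shadow).\<close>
fun subst_tm :: "(var \<Rightarrow> int option) \<Rightarrow> int option \<Rightarrow> tm \<Rightarrow> tm" where
  "subst_tm \<sigma> v (TVar x) = (case \<sigma> x of Some n \<Rightarrow> TLit n | None \<Rightarrow> TVar x)"
| "subst_tm \<sigma> v TNu = (case v of Some n \<Rightarrow> TLit n | None \<Rightarrow> TNu)"
| "subst_tm \<sigma> v (TLit n) = TLit n"
| "subst_tm \<sigma> v (TAdd a b) = TAdd (subst_tm \<sigma> v a) (subst_tm \<sigma> v b)"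
| "subst_tm \<sigma> v (TMul a b) = TMul (subst_tm \<sigma> v a) (subst_tm \<sigma> v b)"
| "subst_tm \<sigma> v (TNeg a) = TNeg (subst_tm \<sigma> v a)"

fun subst :: "(var \<Rightarrow> int option) \<Rightarrow> int option \<Rightarrow> fml \<Rightarrow> fml" where
  "subst \<sigma> v FTrue = FTrue"
| "subst \<sigma> v FFalse = FFalse"
| "subst \<sigma> v (FEq a b) = FEq (subst_tm \<sigma> v a) (subst_tm \<sigma> v b)"
| "subst \<sigma> v (FLe a b) = FLe (subst_tm \<sigma> v a) (subst_tm \<sigma> v b)"
| "subst \<sigma> v (FAtom p ts) = FAtom p (map (subst_tm \<sigma> v) ts)"
| "subst \<sigma> v (FNot f) = FNot (subst \<sigma> v f)"
| "subst \<sigma> v (FAnd f g) = FAnd (subst \<sigma> v f) (subst \<sigma> v g)"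
| "subst \<sigma> v (FOr f g) = FOr (subst \<sigma> v f) (subst \<sigma> v g)"
| "subst \<sigma> v (FImp f g) = FImp (subst \<sigma> v f) (subst \<sigma> v g)"
| "subst \<sigma> v (FAll x f) = FAll x (subst (\<sigma>(x := None)) v f)"
| "subst \<sigma> v (FEx x f) = FEx x (subst (\<sigma>(x := None)) v f)"

datatype ty = TInt fml | TRef ty rat

type_synonym addr = nat

datatype val = VInt int | VAddr addr

type_synonym heap = "addr \<rightharpoonup> val"
type_synonym regfile = "var \<rightharpoonup> val"

fun ty_ok :: "ty \<Rightarrow> bool" where
  "ty_ok (TInt \<phi>) = True"
| "ty_ok (TRef t r) = (0 \<le> r \<and> r \<le> 1 \<and> ty_ok t)"

fun top_ty :: "nat \<Rightarrow> ty" where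
  "top_ty 0 = TInt FTrue"
| "top_ty (Suc n) = TRef (top_ty n) 0"

fun own_wf :: "ty \<Rightarrow> bool" where
  "own_wf (TInt \<phi>) = True"
| "own_wf (TRef t r) = ((r = 0 \<longrightarrow> (\<exists>n. t = top_ty n)) \<and> own_wf t)"

definition reg_int :: "regfile \<Rightarrow> var \<Rightarrow> int option" where
  "reg_int R x = (case R x of Some (VInt n) \<Rightarrow> Some n | _ \<Rightarrow> None)"

definition reg_subst :: "regfile \<Rightarrow> fml \<Rightarrow> fml" where
  "reg_subst R \<phi> = subst (reg_int R) None \<phi>"

definition nu_subst :: "int \<Rightarrow> fml \<Rightarrow> fml" where
  "nu_subst n \<phi> = subst (\<lambda>_. None) (Some n) \<phi>"

fun SATv :: "interp \<Rightarrow> heap \<Rightarrow> regfile \<Rightarrow> val \<Rightarrow> ty \<Rightarrow> bool" where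
  "SATv I H R v (TInt \<phi>) = (case v of VInt n \<Rightarrow> valid I (reg_subst R (nu_subst n \<phi>)) | VAddr _ \<Rightarrow> False)"
| "SATv I H R v (TRef t r) = (case v of VAddr a \<Rightarrow> a \<in> dom H \<and> SATv I H R (the (H a)) t | VInt _ \<Rightarrow> False)"

inductive reach :: "heap \<Rightarrow> val \<Rightarrow> nat \<Rightarrow> bool" where
  reach_int: "reach H (VInt n) 0"
| reach_addr: "reach H v n \<Longrightarrow> H a = Some v \<Longrightarrow> reach H (VAddr a) (Suc n)"

definition heap_equiv :: "heap \<Rightarrow> addr \<Rightarrow> heap \<Rightarrow> bool" where
  "heap_equiv H a H' \<longleftrightarrow> dom H = dom H' \<and> (\<forall>a'\<in>dom H. a' \<noteq> a \<longrightarrow> H a' = H' a')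
     \<and> (\<forall>n. reach H (VAddr a) n \<longleftrightarrow> reach H' (VAddr a) n)"

fun own :: "heap \<Rightarrow> val \<Rightarrow> ty \<Rightarrow> addr \<Rightarrow> rat" where
  "own H (VAddr a) (TRef t r) =
     (if a \<in> dom H then (\<lambda>b. (if b = a then r else 0) + own H (the (H a)) t b) else (\<lambda>_. 0))"
| "own H v t = (\<lambda>_. 0)"

end

theory Submission
  imports Defs
begin

text \<open>Walking down the value along its reference types, the heaps
  H and H' agree at every address other than a. If the walk reaches a, the ownership of a
  is zero only if (all shares being nonnegative) the reference there has ownership 0, so by well-formedness its remaining
  type is some \<open>top_ty n\<close>. Satisfying \<open>top_ty n\<close> says nothing beyond the existence of a chain
  of exactly n dereferences ending in an integer, and this is exactly what \<open>heap_equiv\<close>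
  preserves at a.\<close>

lemma own_nonneg: "ty_ok t \<Longrightarrow> 0 \<le> own H v t b"
proof (induction t arbitrary: v)
  case (TRef t r)
  then show ?case by (cases v) auto
qed (cases v; simp)

lemma own_TRef_eq_0_iff:
  assumes "ty_ok t" "0 \<le> r" "b \<in> dom H"
  shows "own H (VAddr b) (TRef t r) a = 0 \<longleftrightarrow> (a = b \<longrightarrow> r = 0) \<and> own H (the (H b)) t a = 0"
  using assms own_nonneg[OF \<open>ty_ok t\<close>, of H "the (H b)" a] by auto

lemma reach_VAddr_iff: "reach H (VAddr b) (Suc n) \<longleftrightarrow> (\<exists>w. H b = Some w \<and> reach H w n)"
  by (auto elim: reach.cases intro: reach.intros)

lemma SATv_top_ty_iff_reach: "SATv I H R v (top_ty n) \<longleftrightarrow> reach H v n"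
proof (induction n arbitrary: v)
  case 0
  show ?case
    by (cases v) (auto simp: valid_def reg_subst_def nu_subst_def intro: reach.intros
        elim: reach.cases)
next
  case (Suc n)
  show ?case
    by (cases v) (auto simp: Suc reach_VAddr_iff elim: reach.cases)
qed

lemma heap_equiv_dom: "heap_equiv H a H' \<Longrightarrow> dom H' = dom H"
  by (simp add: heap_equiv_def)

lemma heap_equiv_lookup: "heap_equiv H a H' \<Longrightarrow> b \<noteq> a \<Longrightarrow> H' b = H b"
  unfolding heap_equiv_def by (metis domIff)

lemma heap_equiv_reach: "heap_equiv H a H' \<Longrightarrow> reach H' (VAddr a) n \<longleftrightarrow> reach H (VAddr a) n"
  by (simp add: heap_equiv_def)

lemma SATv_top_ty_heap_equiv:
  "heap_equiv H a H' \<Longrightarrow> SATv I H R (VAddr a) (top_ty n) \<Longrightarrow> SATv I H' R (VAddr a) (top_ty n)"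
  by (simp add: SATv_top_ty_iff_reach heap_equiv_reach)

lemma SATv_heap_equiv:
  assumes "ty_ok \<tau>" "own_wf \<tau>" "heap_equiv H a H'" "own H v \<tau> a = 0" "SATv I H R v \<tau>"
  shows "SATv I H' R v \<tau>"
  using assms(1,2,4,5)
proof (induction \<tau> arbitrary: v)
  case (TInt \<phi>)
  then show ?case by (cases v) auto
next
  case (TRef t r)
  then obtain b where v: "v = VAddr b" and b: "b \<in> dom H" and sat: "SATv I H R (the (H b)) t"
    by (cases v) auto
  have own: "(a = b \<longrightarrow> r = 0) \<and> own H (the (H b)) t a = 0"
    using TRef.prems own_TRef_eq_0_iff b v by auto
  show ?case
  proof (cases "a = b")
    case True
    with own TRef.prems obtain n where "r = 0" "t = top_ty n" by auto
    then show ?thesis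
      using SATv_top_ty_heap_equiv[OF assms(3), of I R "Suc n"] TRef.prems v True by simp
  next
    case False
    then have "SATv I H' R (the (H b)) t" using TRef.IH own sat TRef.prems by auto
    then show ?thesis
      using v b False heap_equiv_dom[OF assms(3)] heap_equiv_lookup[OF assms(3)] by auto
  qed
qed

theorem lemma22:
  fixes I :: interp and H H' :: heap and a :: addr and R :: regfile and v :: val and \<tau> :: ty
  assumes "finite (dom H)" and "finite (dom H')" and "finite (dom R)"
    and "ty_ok \<tau>" and "own_wf \<tau>"
    and "heap_equiv H a H'"
    and "own H v \<tau> a = 0"
    and "SATv I H R v \<tau>"
  shows "SATv I H' R v \<tau>"
  using assms(4-8) by (rule SATv_heap_equiv)

end
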